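(* Let $a_1,\dots,a_{12}$ be positive real numbers that can be partitioned into four triples such that each triple consists of the side lengths of a non-degenerate triangle. Then $a_1,\dots,a_{12}$ can be partitioned into three quadruples such that each quadruple consists of the side lengths of a non-degenerate (planar) quadrilateral.
   Context: Three positive reals are the side lengths of a non-degenerate triangle iff the largest is strictly less than the sum of the other two. Four positive reals are the side lengths of a non-degenerate quadrilateral iff the largest is strictly less than the sum of the other three. *)

theory Defs
  imports Complex_Main "HOL-Library.Disjoint_Sets"
begin

text \<open>A finite family of positive reals, indexed by a finite index set S, forms the side
lengths of a non-degenerate polygon (triangle for card S = 3, quadrilateral for card S = 4)
iff the largest side is strictly less than the sum of the others, i.e. every side is
strictly less than the sum of the remaining ones.\<close>
definition polygon_sides :: "(nat \<Rightarrow> real) \<Rightarrow> nat set \<Rightarrow> bool" where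
  "polygon_sides a S \<longleftrightarrow> (\<forall>i\<in>S. a i < (\<Sum>j\<in>S - {i}. a j))"

definition triangle_sides :: "(nat \<Rightarrow> real) \<Rightarrow> nat set \<Rightarrow> bool" where
  "triangle_sides a S \<longleftrightarrow> card S = 3 \<and> polygon_sides a S"

definition quadrilateral_sides :: "(nat \<Rightarrow> real) \<Rightarrow> nat set \<Rightarrow> bool" where
  "quadrilateral_sides a S \<longleftrightarrow> card S = 4 \<and> polygon_sides a S"

end

theory Submission
  imports Defs
begin

text \<open>Pick the triangle \<open>T\<^sub>0\<close> whose longest side is shortest among the four, and give one of
its sides to each of the other three triangles. A side of \<open>T\<^sub>0\<close> is no longer than the longest
side of the triangle receiving it, and adding a positive side no longer than an existing one
keeps every polygon inequality strict; so the three enlarged triangles are quadrilaterals.\<close>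

lemma polygon_sides_insert:
  assumes "finite T" "polygon_sides a T" "e \<notin> T" "m \<in> T" "0 < a e" "a e \<le> a m"
  shows "polygon_sides a (insert e T)"
  unfolding polygon_sides_def
proof
  fix i assume "i \<in> insert e T"
  then consider "i = e" | "i \<in> T" "i \<noteq> e" by blast
  then show "a i < (\<Sum>j\<in>insert e T - {i}. a j)"
  proof cases
    case 1
    have "a m < (\<Sum>j\<in>T - {m}. a j)"
      using assms(2,4) unfolding polygon_sides_def by blast
    moreover have "(\<Sum>j\<in>insert e T - {i}. a j) = a m + (\<Sum>j\<in>T - {m}. a j)"
      using 1 assms(1,3,4) by (simp add: sum.remove)
    ultimately show ?thesis
      using 1 assms(5,6) by simp
  next
    case 2
    have "a i < (\<Sum>j\<in>T - {i}. a j)"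
      using assms(2) 2 unfolding polygon_sides_def by blast
    moreover have "(\<Sum>j\<in>insert e T - {i}. a j) = a e + (\<Sum>j\<in>T - {i}. a j)"
      using 2 assms(1,3) by (simp add: insert_Diff_if)
    ultimately show ?thesis
      using assms(5) by linarith
  qed
qed

lemma quadrilateral_sides_insert:
  assumes "triangle_sides a T" "e \<notin> T" "m \<in> T" "0 < a e" "a e \<le> a m"
  shows "quadrilateral_sides a (insert e T)"
proof -
  have "card T = 3" "polygon_sides a T"
    using assms(1) unfolding triangle_sides_def by auto
  moreover from this have "finite T"
    by (intro card_ge_0_finite) simp
  ultimately show ?thesis
    using polygon_sides_insert[OF _ _ assms(2-5)] assms(2)
    unfolding quadrilateral_sides_def by simp
qed

lemma ex_block_dominated:
  fixes a :: "'a \<Rightarrow> 'b::linorder"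
  assumes "finite P" "P \<noteq> {}" "\<And>T. T \<in> P \<Longrightarrow> finite T \<and> T \<noteq> {}"
  obtains T\<^sub>0 where "T\<^sub>0 \<in> P" "\<And>T e. T \<in> P \<Longrightarrow> e \<in> T\<^sub>0 \<Longrightarrow> \<exists>m\<in>T. a e \<le> a m"
proof -
  define M where "M T = Max (a ` T)" for T
  define T\<^sub>0 where "T\<^sub>0 = arg_min_on M P"
  have "T\<^sub>0 \<in> P" and min: "\<And>T. T \<in> P \<Longrightarrow> M T\<^sub>0 \<le> M T"
    using arg_min_if_finite[OF assms(1,2), of M] unfolding T\<^sub>0_def by (auto simp: not_less)
  moreover have "\<exists>m\<in>T. a e \<le> a m" if "T \<in> P" "e \<in> T\<^sub>0" for T e
  proof -
    have "a e \<le> M T\<^sub>0"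
      using assms(3)[OF \<open>T\<^sub>0 \<in> P\<close>] \<open>e \<in> T\<^sub>0\<close> unfolding M_def by simp
    then have "a e \<le> M T"
      using min[OF \<open>T \<in> P\<close>] by order
    moreover have "M T \<in> a ` T"
      using Max_in assms(3)[OF \<open>T \<in> P\<close>] unfolding M_def by blast
    ultimately show ?thesis by auto
  qed
  ultimately show ?thesis using that by blast
qed

lemma partition_on_distribute:
  assumes part: "partition_on A P" and "T \<in> P" and f: "bij_betw f T (P - {T})"
  shows "partition_on A ((\<lambda>e. insert e (f e)) ` T)"
    and "inj_on (\<lambda>e. insert e (f e)) T"
proof -
  have disj: "X \<inter> Y = {}" if "X \<in> P" "Y \<in> P" "X \<noteq> Y" for X Y
    using partition_onD2[OF part] that by (auto dest: disjointD)
  have fP: "f e \<in> P" "f e \<noteq> T" if "e \<in> T" for e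
    using f that by (auto dest: bij_betwE)
  have fT: "f e \<inter> T = {}" if "e \<in> T" for e
    using disj[OF fP(1) \<open>T \<in> P\<close> fP(2)] that by blast
  show inj: "inj_on (\<lambda>e. insert e (f e)) T"
  proof (rule inj_onI)
    fix e e' assume "e \<in> T" "e' \<in> T" "insert e (f e) = insert e' (f e')"
    then have "insert e (f e) \<inter> T = insert e' (f e') \<inter> T" by simp
    then show "e = e'"
      using fT[OF \<open>e \<in> T\<close>] fT[OF \<open>e' \<in> T\<close>] \<open>e \<in> T\<close> \<open>e' \<in> T\<close> by auto
  qed
  show "partition_on A ((\<lambda>e. insert e (f e)) ` T)"
  proof (rule partition_onI)
    have "\<Union>P = T \<union> \<Union>(P - {T})" using \<open>T \<in> P\<close> by blast
    also have "\<dots> = T \<union> \<Union>(f ` T)" using bij_betw_imp_surj_on[OF f] by simp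
    finally show "\<Union>((\<lambda>e. insert e (f e)) ` T) = A"
      using partition_onD1[OF part] by blast
  next
    fix p q
    assume "p \<in> (\<lambda>e. insert e (f e)) ` T" "q \<in> (\<lambda>e. insert e (f e)) ` T" "p \<noteq> q"
    then obtain e e' where "e \<in> T" "e' \<in> T" "e \<noteq> e'"
      and p: "p = insert e (f e)" and q: "q = insert e' (f e')" by blast
    moreover have "f e \<inter> f e' = {}"
      using disj fP \<open>e \<in> T\<close> \<open>e' \<in> T\<close> \<open>e \<noteq> e'\<close> bij_betw_imp_inj_on[OF f]
      by (metis inj_onD)
    ultimately show "disjnt p q"
      using fT[OF \<open>e \<in> T\<close>] fT[OF \<open>e' \<in> T\<close>] unfolding disjnt_def by auto
  qed auto
qed

theorem mainTheorem1:
  fixes a :: "nat \<Rightarrow> real"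
  assumes pos: "\<forall>i\<in>{1..12}. a i > 0"
    and tri: "\<exists>P. partition_on {1..12::nat} P \<and> card P = 4 \<and> (\<forall>T\<in>P. triangle_sides a T)"
  shows "\<exists>Q. partition_on {1..12::nat} Q \<and> card Q = 3 \<and> (\<forall>U\<in>Q. quadrilateral_sides a U)"
proof -
  obtain P where part: "partition_on {1..12} P" and "card P = 4"
    and tP: "\<forall>T\<in>P. triangle_sides a T" using tri by blast
  then have "finite P" "P \<noteq> {}" by (auto intro: card_ge_0_finite)
  have blocks: "finite T \<and> T \<noteq> {} \<and> card T = 3" if "T \<in> P" for T
    using tP that unfolding triangle_sides_def by (auto intro: card_ge_0_finite)
  obtain T\<^sub>0 where "T\<^sub>0 \<in> P" and dom: "\<And>T e. T \<in> P \<Longrightarrow> e \<in> T\<^sub>0 \<Longrightarrow> \<exists>m\<in>T. a e \<le> a m"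
    using ex_block_dominated[OF \<open>finite P\<close> \<open>P \<noteq> {}\<close>, of a] blocks by blast
  have "card T\<^sub>0 = card (P - {T\<^sub>0})"
    using blocks[OF \<open>T\<^sub>0 \<in> P\<close>] \<open>card P = 4\<close> \<open>T\<^sub>0 \<in> P\<close> by simp
  then obtain f where f: "bij_betw f T\<^sub>0 (P - {T\<^sub>0})"
    using finite_same_card_bij blocks[OF \<open>T\<^sub>0 \<in> P\<close>] \<open>finite P\<close> by blast
  define Q where "Q = (\<lambda>e. insert e (f e)) ` T\<^sub>0"
  have "partition_on {1..12} Q" "card Q = 3"
    using partition_on_distribute[OF part \<open>T\<^sub>0 \<in> P\<close> f] blocks[OF \<open>T\<^sub>0 \<in> P\<close>]
    unfolding Q_def by (auto simp: card_image)
  moreover have "quadrilateral_sides a (insert e (f e))" if "e \<in> T\<^sub>0" for e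
  proof -
    have "f e \<in> P" "f e \<noteq> T\<^sub>0" using f that by (auto dest: bij_betwE)
    then have "e \<notin> f e"
      using partition_onD2[OF part] \<open>T\<^sub>0 \<in> P\<close> that by (auto dest: disjointD)
    moreover have "0 < a e"
      using pos partition_onD1[OF part] \<open>T\<^sub>0 \<in> P\<close> that by blast
    ultimately show ?thesis
      using dom[OF \<open>f e \<in> P\<close> that] tP \<open>f e \<in> P\<close> quadrilateral_sides_insert by blast
  qed
  ultimately show ?thesis unfolding Q_def by blast
qed

end
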